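(* Let $R=\mathbb{Z}_4+u\mathbb{Z}_4$ with $u^2=0$, and let $\phi:R^n\to\mathbb{Z}_4^{2n}$ be the Gray map $\phi(c_0,\dots,c_{n-1})=(b_0,\dots,b_{n-1},2a_0+b_0,\dots,2a_{n-1}+b_{n-1})$, where $c_i=a_i+ub_i$ with $a_i,b_i\in\mathbb{Z}_4$. If $C$ is a linear $(1+2u)$-constacyclic code over $R$ of length $n$, then $\phi(C)$ is a linear cyclic code over $\mathbb{Z}_4$ of length $2n$, and $\phi$ preserves Lee distances between $C$ and $\phi(C)$.
   Context: A linear code of length $n$ over $R$ is an $R$-submodule of $R^n$; it is $(1+2u)$-constacyclic if invariant under $(c_0,\dots,c_{n-1})\mapsto((1+2u)c_{n-1},c_0,\dots,c_{n-2})$. A linear cyclic code over $\mathbb{Z}_4$ of length $2n$ is a $\mathbb{Z}_4$-submodule of $\mathbb{Z}_4^{2n}$ invariant under the cyclic shift. Lee weight on $\mathbb{Z}_4$: $w_L(0)=0,w_L(1)=w_L(3)=1,w_L(2)=2$, extended additively; on $R$: $w_L(a+ub)=w_L(b)+w_L(2a+b)$, extended additively to $R^n$; Lee distance $d_L(x,y)=w_L(x-y)$. *)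

theory Defs
  imports Main "HOL-Library.Numeral_Type"
begin

text \<open>The ring Z4 is the library type 4 (integers modulo 4).
  An element a + u b of R = Z4 + u Z4 (u^2 = 0) is represented by the pair (a, b).\<close>

type_synonym z4 = "4"
type_synonym R = "4 \<times> 4"

definition radd :: "R \<Rightarrow> R \<Rightarrow> R" where
  "radd x y = (fst x + fst y, snd x + snd y)"

definition rsub :: "R \<Rightarrow> R \<Rightarrow> R" where
  "rsub x y = (fst x - fst y, snd x - snd y)"

definition rmul :: "R \<Rightarrow> R \<Rightarrow> R" where
  "rmul x y = (fst x * fst y, fst x * snd y + snd x * fst y)"

definition rzero :: R where "rzero = (0, 0)"

definition one_plus_2u :: R where "one_plus_2u = (1, 2)"

definition R_linear_code :: "nat \<Rightarrow> R list set \<Rightarrow> bool" where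
  "R_linear_code n C \<longleftrightarrow>
     (\<forall>c\<in>C. length c = n) \<and> replicate n rzero \<in> C \<and>
     (\<forall>x\<in>C. \<forall>y\<in>C. map2 radd x y \<in> C) \<and>
     (\<forall>r. \<forall>x\<in>C. map (rmul r) x \<in> C)"

definition consta_shift :: "R list \<Rightarrow> R list" where
  "consta_shift c = (if c = [] then [] else rmul one_plus_2u (last c) # butlast c)"

definition R_constacyclic_code :: "nat \<Rightarrow> R list set \<Rightarrow> bool" where
  "R_constacyclic_code n C \<longleftrightarrow> R_linear_code n C \<and> (\<forall>c\<in>C. consta_shift c \<in> C)"

definition Z4_linear_code :: "nat \<Rightarrow> z4 list set \<Rightarrow> bool" where
  "Z4_linear_code m D \<longleftrightarrow>
     (\<forall>c\<in>D. length c = m) \<and> replicate m 0 \<in> D \<and>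
     (\<forall>x\<in>D. \<forall>y\<in>D. map2 (+) x y \<in> D) \<and>
     (\<forall>r::z4. \<forall>x\<in>D. map ((*) r) x \<in> D)"

definition cyc_shift :: "z4 list \<Rightarrow> z4 list" where
  "cyc_shift c = (if c = [] then [] else last c # butlast c)"

definition Z4_cyclic_code :: "nat \<Rightarrow> z4 list set \<Rightarrow> bool" where
  "Z4_cyclic_code m D \<longleftrightarrow> Z4_linear_code m D \<and> (\<forall>c\<in>D. cyc_shift c \<in> D)"

definition gray :: "R list \<Rightarrow> z4 list" where
  "gray c = map snd c @ map (\<lambda>x. 2 * fst x + snd x) c"

definition lee_z4 :: "z4 \<Rightarrow> nat" where
  "lee_z4 x = (if x = 0 then 0 else if x = 2 then 2 else 1)"

definition lee_R :: "R \<Rightarrow> nat" where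
  "lee_R x = lee_z4 (snd x) + lee_z4 (2 * fst x + snd x)"

definition lee_wt_z4 :: "z4 list \<Rightarrow> nat" where
  "lee_wt_z4 v = sum_list (map lee_z4 v)"

definition lee_wt_R :: "R list \<Rightarrow> nat" where
  "lee_wt_R v = sum_list (map lee_R v)"

definition lee_dist_z4 :: "z4 list \<Rightarrow> z4 list \<Rightarrow> nat" where
  "lee_dist_z4 x y = lee_wt_z4 (map2 (-) x y)"

definition lee_dist_R :: "R list \<Rightarrow> R list \<Rightarrow> nat" where
  "lee_dist_R x y = lee_wt_R (map2 rsub x y)"

end

theory Submission imports Defs begin

text \<open>Writing an element of \<open>R\<close> as \<open>a + ub\<close>, the Gray map sends it to the pair of coordinates
  \<open>(b, 2a + b)\<close>. This is additive, commutes with scalars \<open>r \<in> \<int>\<^sub>4\<close> (acting on \<open>R\<close> as \<open>r + u0\<close>),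
  and is a Lee isometry by the very definition of the Lee weight on \<open>R\<close>. Multiplying by \<open>1 + 2u\<close>
  turns \<open>(a, b)\<close> into \<open>(a, 2a + b)\<close>, which swaps the two Gray coordinates since \<open>4a = 0\<close>; hence the
  \<open>(1 + 2u)\<close>-constacyclic shift of \<open>c\<close> is mapped to the cyclic shift of the Gray image of \<open>c\<close>.\<close>

lemma double_add_double_z4: "(2::z4) * a + 2 * a = 0"
proof -
  have "(2::z4) * a + 2 * a = 4 * a" by (simp add: algebra_simps)
  also have "(4::z4) = 0" by simp
  finally show ?thesis by simp
qed

lemma rmul_one_plus_2u: "rmul one_plus_2u x = (fst x, 2 * fst x + snd x)"
  by (simp add: rmul_def one_plus_2u_def algebra_simps)

lemma length_gray: "length (gray c) = 2 * length c"
  by (simp add: gray_def)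

lemma gray_map2:
  assumes "length x = length y"
    and "\<And>a b. snd (f a b) = g (snd a) (snd b)"
    and "\<And>a b. 2 * fst (f a b) + snd (f a b) = g (2 * fst a + snd a) (2 * fst b + snd b)"
  shows "gray (map2 f x y) = map2 g (gray x) (gray y)"
proof -
  have "map snd (map2 f x y) = map2 g (map snd x) (map snd y)"
    by (simp add: zip_map_map split_def assms(2))
  moreover have "map (\<lambda>c. 2 * fst c + snd c) (map2 f x y)
      = map2 g (map (\<lambda>c. 2 * fst c + snd c) x) (map (\<lambda>c. 2 * fst c + snd c) y)"
    by (simp add: zip_map_map split_def assms(3))
  ultimately show ?thesis
    using assms(1) by (simp add: gray_def zip_append)
qed

lemma gray_radd:
  "length x = length y \<Longrightarrow> gray (map2 radd x y) = map2 (+) (gray x) (gray y)"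
  by (rule gray_map2) (simp_all add: radd_def algebra_simps)

lemma gray_rsub:
  "length x = length y \<Longrightarrow> gray (map2 rsub x y) = map2 (-) (gray x) (gray y)"
  by (rule gray_map2) (simp_all add: rsub_def algebra_simps)

lemma gray_scalar: "gray (map (rmul (r, 0)) x) = map ((*) r) (gray x)"
  by (simp add: gray_def rmul_def algebra_simps)

lemma gray_replicate_zero: "gray (replicate n rzero) = replicate (2 * n) 0"
proof -
  have "gray (replicate n rzero) = replicate n 0 @ replicate n 0"
    by (simp add: gray_def rzero_def)
  also have "\<dots> = replicate (2 * n) 0"
    by (simp only: mult_2 replicate_add)
  finally show ?thesis .
qed

lemma gray_consta_shift: "gray (consta_shift c) = cyc_shift (gray c)"
proof (cases c rule: rev_exhaust)
  case Nil
  then show ?thesis by (simp add: gray_def cyc_shift_def consta_shift_def)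
next
  case (snoc xs x)
  have "2 * fst x + (2 * fst x + snd x) = snd x"
    using double_add_double_z4[of "fst x"] by (simp add: add.assoc [symmetric])
  with snoc show ?thesis
    by (simp add: gray_def cyc_shift_def consta_shift_def rmul_one_plus_2u butlast_append)
qed

lemma lee_wt_gray: "lee_wt_z4 (gray v) = lee_wt_R v"
  by (simp add: gray_def lee_wt_z4_def lee_wt_R_def lee_R_def[abs_def] sum_list_addf comp_def)

lemma lee_dist_gray:
  "length x = length y \<Longrightarrow> lee_dist_z4 (gray x) (gray y) = lee_dist_R x y"
  by (simp add: lee_dist_z4_def lee_dist_R_def lee_wt_gray flip: gray_rsub)

lemma Z4_linear_code_gray_image:
  assumes "R_linear_code n C"
  shows "Z4_linear_code (2 * n) (gray ` C)"
proof -
  from assms have len: "\<And>c. c \<in> C \<Longrightarrow> length c = n"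
    and zero: "replicate n rzero \<in> C"
    and add: "\<And>x y. x \<in> C \<Longrightarrow> y \<in> C \<Longrightarrow> map2 radd x y \<in> C"
    and scalar: "\<And>r x. x \<in> C \<Longrightarrow> map (rmul r) x \<in> C"
    by (auto simp: R_linear_code_def)
  show ?thesis
    unfolding Z4_linear_code_def
  proof (intro conjI ballI allI)
    show "length c = 2 * n" if "c \<in> gray ` C" for c
      using that len by (auto simp: length_gray)
    show "replicate (2 * n) 0 \<in> gray ` C"
      using zero by (metis gray_replicate_zero image_eqI)
    show "map2 (+) c d \<in> gray ` C" if "c \<in> gray ` C" "d \<in> gray ` C" for c d
    proof -
      from that obtain x y where xy: "x \<in> C" "y \<in> C" and "c = gray x" "d = gray y"
        by blast
      then have "map2 (+) c d = gray (map2 radd x y)"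
        using len by (simp add: gray_radd)
      with add[OF xy] show ?thesis by blast
    qed
    show "map ((*) r) c \<in> gray ` C" if "c \<in> gray ` C" for r c
    proof -
      from that obtain x where x: "x \<in> C" and "c = gray x" by blast
      then have "map ((*) r) c = gray (map (rmul (r, 0)) x)" by (simp add: gray_scalar)
      with scalar[OF x] show ?thesis by blast
    qed
  qed
qed

theorem theorem5p2:
  fixes n :: nat and C :: "R list set"
  assumes "R_constacyclic_code n C"
  shows "Z4_cyclic_code (2 * n) (gray ` C)
         \<and> (\<forall>x\<in>C. \<forall>y\<in>C. lee_dist_z4 (gray x) (gray y) = lee_dist_R x y)"
proof -
  from assms have linear: "R_linear_code n C"
    and shift_closed: "\<forall>c\<in>C. consta_shift c \<in> C"
    by (simp_all add: R_constacyclic_code_def)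
  have "\<forall>c\<in>gray ` C. cyc_shift c \<in> gray ` C"
    using shift_closed by (auto simp flip: gray_consta_shift)
  moreover have "\<forall>x\<in>C. \<forall>y\<in>C. lee_dist_z4 (gray x) (gray y) = lee_dist_R x y"
    using linear by (simp add: R_linear_code_def lee_dist_gray)
  ultimately show ?thesis
    using Z4_linear_code_gray_image[OF linear] by (simp add: Z4_cyclic_code_def)
qed

end
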